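(* Let $\ell$ be an odd prime. Then, as $T\to\infty$, $$|S^1(\ell,T)| \ll T,$$ where the implied constant may depend on $\ell$.
   Context: $\Phi_\ell(X)$ denotes the $\ell$-th cyclotomic polynomial. For a natural number $n$, $R_\ell(n):=\min\{d\in\mathbb{N}: n\mid \Phi_\ell(d)\}$ if such $d$ exists, and $R_\ell(n)=\infty$ otherwise. $\mathbb{P}$ denotes the set of primes $p$ that divide $\Phi_\ell(d)$ for some $d\in\mathbb{N}$. For a positive integer $i$ and real $T$, $S^i(\ell,T):=\{p\in\mathbb{P}: R_\ell(p^i)\le T\}$. *)

theory Defs
  imports "HOL-Analysis.Analysis" "HOL-Computational_Algebra.Polynomial" "HOL-Library.Extended_Nat"
begin

definition cyclotomic :: "nat \<Rightarrow> complex poly" where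
  "cyclotomic n = (\<Prod>k\<in>{k\<in>{1..n}. coprime k n}. [:- cis (2 * pi * real k / real n), 1:])"

definition cyc_dvd :: "nat \<Rightarrow> nat \<Rightarrow> nat \<Rightarrow> bool" where
  "cyc_dvd l n d \<longleftrightarrow> (\<exists>m::int. poly (cyclotomic l) (of_nat d) = of_int (int n * m))"

definition R :: "nat \<Rightarrow> nat \<Rightarrow> enat" where
  "R l n = (if \<exists>d. d \<ge> 1 \<and> cyc_dvd l n d
            then enat (LEAST d. d \<ge> 1 \<and> cyc_dvd l n d) else \<infinity>)"

definition PP :: "nat \<Rightarrow> nat set" where
  "PP l = {p. prime p \<and> (\<exists>d. d \<ge> 1 \<and> cyc_dvd l p d)}"

definition S :: "nat \<Rightarrow> nat \<Rightarrow> real \<Rightarrow> nat set" where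
  "S i l T = {p \<in> PP l. R l (p ^ i) \<noteq> \<infinity> \<and> real (the_enat (R l (p ^ i))) \<le> T}"

end

theory Submission imports Defs "HOL-Computational_Algebra.Primes" begin

text \<open>
  For a prime \<open>\<ell>\<close> we have \<open>\<Phi>\<^sub>\<ell>(d) = 1 + d + \<dots> + d\<^sup>\<ell>\<^sup>-\<^sup>1\<close>, a polynomial with integer
  coefficients and \<open>\<Phi>\<^sub>\<ell>(0) = 1\<close>. Hence if \<open>d = R\<^sub>\<ell>(p)\<close> then \<open>d mod p\<close> is again a positive
  root of \<open>\<Phi>\<^sub>\<ell>\<close> modulo \<open>p\<close>, and minimality forces \<open>d < p\<close>. So every \<open>p \<in> S\<^sup>1(\<ell>,T)\<close> is a
  prime divisor exceeding \<open>d\<close> of \<open>\<Phi>\<^sub>\<ell>(d)\<close> for some \<open>d \<le> T\<close>. Since \<open>\<Phi>\<^sub>\<ell>(d) < (d+1)\<^sup>\<ell>\<close>,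
  fewer than \<open>\<ell>\<close> primes larger than \<open>d\<close> divide it, and \<open>|S\<^sup>1(\<ell>,T)| \<le> \<ell> T\<close>.
\<close>

lemma X_pow_minus_one_eq_prod_roots_unity:
  assumes "n > 0"
  shows "[:0, 1:] ^ n - 1 = (\<Prod>k<n. [:- cis (2 * pi * real k / real n), 1:] :: complex poly)"
    (is "_ = ?P")
proof (rule poly_eqI_degree_lead_coeff[where n = n and A = "{z. z ^ n = 1}"])
  have "degree ?P = n" by (subst degree_prod_eq_sum_degree) auto
  moreover have "lead_coeff ?P = 1" by (simp add: lead_coeff_prod)
  ultimately show "coeff ([:0, 1:] ^ n - 1) n = coeff ?P n" "degree ?P \<le> n"
    using assms by (auto simp: coeff_linear_power)
  show "degree ([:0, 1:] ^ n - 1 :: complex poly) \<le> n"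
    by (rule degree_diff_le) (auto simp: degree_linear_power)
  show "n \<le> card {z :: complex. z ^ n = 1}" using card_roots_unity_eq assms by simp
next
  fix z :: complex assume "z \<in> {z. z ^ n = 1}"
  then obtain k where "k < n" "z = cis (2 * pi * real k / real n)"
    using Complex.bij_betw_roots_unity[OF assms] unfolding bij_betw_def by auto
  then show "poly ([:0, 1:] ^ n - 1) z = poly ?P z"
    using \<open>z \<in> _\<close> by (auto simp: poly_prod prod_zero_iff)
qed

lemma cyclotomic_prime:
  assumes "prime p"
  shows "cyclotomic p = (\<Sum>i<p. [:0, 1:] ^ i)"
proof -
  have p: "p > 1" using assms prime_gt_1_nat by blast
  have "{k \<in> {1..p}. coprime k p} = {1..<p}"
  proof safe
    fix k assume "k \<in> {1..p}" "coprime k p"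
    then show "k \<in> {1..<p}" using p by (cases "k = p") auto
  next
    fix k assume "k \<in> {1..<p}"
    then have "\<not> p dvd k" by (auto dest: dvd_imp_le)
    then show "coprime k p" using assms prime_imp_coprime coprime_commute by blast
  qed auto
  then have "[:-1, 1:] * cyclotomic p = (\<Prod>k<p. [:- cis (2 * pi * real k / real p), 1:])"
    using p by (simp add: cyclotomic_def lessThan_atLeast0 prod.atLeast_Suc_lessThan)
  also have "\<dots> = [:0, 1:] ^ p - 1"
    using p by (simp add: X_pow_minus_one_eq_prod_roots_unity)
  also have "\<dots> = ([:0, 1:] - 1) * (\<Sum>i<p. [:0, 1:] ^ i)"
    by (rule power_diff_1_eq)
  also have "[:0, 1:] - 1 = ([:-1, 1:] :: complex poly)"
    by (simp add: one_pCons)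
  finally show ?thesis
    by (simp del: mult_pCons_left)
qed

lemma cyc_dvd_prime_iff:
  assumes "prime l"
  shows "cyc_dvd l n d \<longleftrightarrow> n dvd (\<Sum>j<l. d ^ j)"
proof -
  have "poly (cyclotomic l) (of_nat d) = of_int (int (\<Sum>j<l. d ^ j))"
    by (simp add: cyclotomic_prime[OF assms] poly_sum)
  then have "cyc_dvd l n d \<longleftrightarrow> (\<exists>m. int (\<Sum>j<l. d ^ j) = int n * m)"
    unfolding cyc_dvd_def of_int_eq_iff by presburger
  also have "\<dots> \<longleftrightarrow> int n dvd int (\<Sum>j<l. d ^ j)" by (simp only: dvd_def)
  finally show ?thesis by (simp only: int_dvd_int_iff)
qed

lemma R_prime:
  assumes "prime l"
  shows "R l n = (if \<exists>d \<ge> 1. n dvd (\<Sum>j<l. d ^ j)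
                  then enat (LEAST d. d \<ge> 1 \<and> n dvd (\<Sum>j<l. d ^ j)) else \<infinity>)"
  by (simp add: R_def cyc_dvd_prime_iff[OF assms])

lemma geometric_sum_pos:
  assumes "l > 0"
  shows "(\<Sum>j<l. d ^ j :: nat) > 0"
proof -
  have "d ^ 0 \<le> (\<Sum>j<l. d ^ j)" by (rule member_le_sum) (use assms in auto)
  then show ?thesis by simp
qed

lemma geometric_sum_lt_Suc_power:
  assumes "d \<ge> 1"
  shows "(\<Sum>j<l. d ^ j :: nat) < (d + 1) ^ l"
proof (induction l)
  case 0 then show ?case by simp
next
  case (Suc l)
  have "d ^ l \<le> d * (d + 1) ^ l"
    using assms power_mono[of d "d + 1" l] by (simp add: le_trans)
  with Suc.IH show ?case by simp
qed

lemma geometric_sum_mod: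
  "(\<Sum>j<l. d ^ j) mod p = (\<Sum>j<l. (d mod p) ^ j) mod (p :: nat)"
proof -
  have "(\<Sum>j<l. d ^ j) mod p = (\<Sum>j<l. d ^ j mod p) mod p" by (simp add: mod_sum_eq)
  also have "\<dots> = (\<Sum>j<l. (d mod p) ^ j mod p) mod p" by (simp add: power_mod)
  also have "\<dots> = (\<Sum>j<l. (d mod p) ^ j) mod p" by (simp add: mod_sum_eq)
  finally show ?thesis .
qed

lemma Least_geometric_sum_root_lt_prime:
  fixes p l d :: nat
  assumes "prime p" "l > 0" "p dvd (\<Sum>j<l. d ^ j)"
  shows "(LEAST d. d \<ge> 1 \<and> p dvd (\<Sum>j<l. d ^ j)) < p"
proof -
  have root: "p dvd (\<Sum>j<l. (d mod p) ^ j)"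
    using assms(3) geometric_sum_mod[of d l p] by (simp add: dvd_eq_mod_eq_0)
  have "d mod p \<noteq> 0"
  proof
    assume "d mod p = 0"
    with root have "p dvd 1" using assms(2) by (simp add: power_0_left)
    with assms(1) show False by simp
  qed
  with root have "(LEAST d. d \<ge> 1 \<and> p dvd (\<Sum>j<l. d ^ j)) \<le> d mod p"
    by (intro Least_le) simp
  also have "d mod p < p" using assms(1) prime_gt_0_nat by simp
  finally show ?thesis .
qed

lemma prod_dvd_of_subset_prime_factors:
  assumes "A \<subseteq> prime_factors n"
  shows "\<Prod>A dvd (n :: nat)"
proof (cases "n = 0")
  case False
  have "mset_set A \<subseteq># mset_set (prime_factors n)"
    using assms by (simp add: subset_imp_msubset_mset_set)
  also have "\<dots> \<subseteq># prime_factorization n" by (rule mset_set_set_mset_msubset)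
  finally have "prod_mset (mset_set A) dvd prod_mset (prime_factorization n)"
    by (rule prod_mset_subset_imp_dvd)
  with False show ?thesis by (simp add: prod_unfold_prod_mset[of "\<lambda>p. p"])
qed simp

lemma card_prime_factors_gt_lt:
  fixes n d k :: nat
  assumes "n > 0" "n < (d + 1) ^ k"
  shows "card {p \<in> prime_factors n. d < p} < k"
proof (rule ccontr)
  let ?A = "{p \<in> prime_factors n. d < p}"
  assume "\<not> card ?A < k"
  then have "k \<le> card ?A" by simp
  then have "(d + 1) ^ k \<le> (d + 1) ^ card ?A" by (rule power_increasing) simp
  also have "\<dots> = (\<Prod>p\<in>?A. d + 1)" by simp
  also have "\<dots> \<le> \<Prod>?A" by (rule prod_mono) auto
  also have "\<dots> \<le> n"
    using assms(1) by (intro dvd_imp_le prod_dvd_of_subset_prime_factors) auto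
  finally show False using assms(2) by simp
qed

lemma S1_subset_large_prime_factors:
  assumes "prime l"
  shows "S 1 l T \<subseteq> (\<Union>d\<in>{1..nat \<lfloor>T\<rfloor>}. {p \<in> prime_factors (\<Sum>j<l. d ^ j). d < p})"
proof
  fix p assume "p \<in> S 1 l T"
  then have p: "prime p" "R l p \<noteq> \<infinity>" "real (the_enat (R l p)) \<le> T"
    by (auto simp: S_def PP_def)
  define d where "d = (LEAST d. d \<ge> 1 \<and> p dvd (\<Sum>j<l. d ^ j))"
  have ex: "\<exists>d \<ge> 1. p dvd (\<Sum>j<l. d ^ j)" and Rp: "R l p = enat d"
    using p(2) by (auto simp: R_prime[OF assms] d_def split: if_splits)
  have d: "d \<ge> 1 \<and> p dvd (\<Sum>j<l. d ^ j)"
    unfolding d_def by (rule LeastI_ex[OF ex])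
  have "l > 0" using assms prime_gt_0_nat by blast
  then have "d < p" "(\<Sum>j<l. d ^ j) \<noteq> 0"
    using Least_geometric_sum_root_lt_prime[OF p(1)] d geometric_sum_pos
    by (auto simp: d_def)
  moreover have "d \<le> nat \<lfloor>T\<rfloor>" using p(3) Rp by (simp add: le_nat_floor)
  ultimately show "p \<in> (\<Union>d\<in>{1..nat \<lfloor>T\<rfloor>}. {p \<in> prime_factors (\<Sum>j<l. d ^ j). d < p})"
    using d p(1) by (auto simp: in_prime_factors_iff)
qed

theorem theorem1:
  fixes l :: nat
  assumes "prime l" and "odd l"
  shows "\<exists>C::real. \<forall>\<^sub>F T in at_top.
           finite (S 1 l T) \<and> real (card (S 1 l T)) \<le> C * T"
proof (intro exI[of _ "real l"] eventually_at_top_linorderI[of 0] allI impI)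
  fix T :: real assume "T \<ge> 0"
  define N where "N = nat \<lfloor>T\<rfloor>"
  define A where "A d = {p \<in> prime_factors (\<Sum>j<l. d ^ j). d < p}" for d :: nat
  have "l > 0" using assms(1) prime_gt_0_nat by blast
  have card_A: "card (A d) \<le> l" if "d \<ge> 1" for d
    using card_prime_factors_gt_lt[OF geometric_sum_pos[OF \<open>l > 0\<close>]
        geometric_sum_lt_Suc_power[OF that]]
    unfolding A_def by simp
  have sub: "S 1 l T \<subseteq> (\<Union>d\<in>{1..N}. A d)"
    unfolding N_def A_def by (rule S1_subset_large_prime_factors[OF assms(1)])
  have fin: "finite (\<Union>d\<in>{1..N}. A d)" by (simp add: A_def)
  have "card (S 1 l T) \<le> card (\<Union>d\<in>{1..N}. A d)" by (rule card_mono[OF fin sub])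
  also have "\<dots> \<le> (\<Sum>d\<in>{1..N}. card (A d))" by (rule card_UN_le) simp
  also have "\<dots> \<le> l * N"
    using sum_bounded_above[of "{1..N}" "\<lambda>d. card (A d)" l] card_A by (simp add: mult.commute)
  finally have "real (card (S 1 l T)) \<le> real l * real N"
    by (simp only: of_nat_mult[symmetric] of_nat_le_iff)
  also have "\<dots> \<le> real l * T" using \<open>T \<ge> 0\<close> by (intro mult_left_mono) (simp_all add: N_def)
  finally show "finite (S 1 l T) \<and> real (card (S 1 l T)) \<le> real l * T"
    using finite_subset[OF sub fin] by simp
qed

end
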